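(* Consider a monodromic hyperbolic polycycle of a planar vector field, perturbed in a one-parameter family (parameter $\varepsilon\ge 0$) in which only one separatrix connection is broken (with nonzero speed), and suppose there is an external saddle one of whose separatrices winds onto the polycycle from its monodromic side. Let $\Lambda(\varepsilon)$ be the product of the characteristic numbers of the saddles of the polycycle, assumed irrational at $\varepsilon=0$, with $\Lambda:=\Lambda(0)<1$. Suppose that, in a canonical chart $x$ on a semitransversal $\Gamma_+$, the monodromy map has the form $f_\varepsilon(x)=Cx^{\Lambda(\varepsilon)}+\varepsilon(1+\psi(x^{\Lambda(\varepsilon)},\varepsilon))$ with $\psi$ continuous and $\psi(0,0)=0$, and let $B(\varepsilon)$ be the coordinate of the last intersection of the separatrix of the external saddle with $\Gamma_+$, $B=B(0)$. Let $\varepsilon_n\to 0$ be the parameter values corresponding to separatrix connections with the external saddle, given by $f^{n+1}_{\varepsilon_n}(0)=B(\varepsilon_n)$. Then $$\ln(-\ln\varepsilon_n)=-n\ln\Lambda+\beta+\theta\Lambda^n+R_n,$$ where $\beta=\ln\bigl(\frac{1}{1-\Lambda}\ln C-\ln B\bigr)$, $\theta=-\bigl(\frac{\ln C}{1-\Lambda}-\ln B\bigr)^{-1}\frac{\ln C}{1-\Lambda}$, and $R_n=o(\Lambda^n)$ as $n\to+\infty$.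
   Context: The characteristic number of a hyperbolic saddle with eigenvalues $\lambda_-<0<\lambda_+$ is $-\lambda_-/\lambda_+$. The coordinate $x$ on $\Gamma_+$ has $x=0$ at the polycycle; the point $x=0$ for $\varepsilon>0$ lies on the separatrix that formed the broken connection, and $\varepsilon>0$ corresponds to that separatrix entering the monodromic side. *)

theory Defs
  imports Complex_Main "HOL-Library.Landau_Symbols"
begin

definition monodromy_map ::
  "real \<Rightarrow> (real \<Rightarrow> real) \<Rightarrow> (real \<Rightarrow> real \<Rightarrow> real) \<Rightarrow> real \<Rightarrow> real \<Rightarrow> real" where
  "monodromy_map C Lam psi eps x = C * x powr Lam eps + eps * (1 + psi (x powr Lam eps) eps)"

end

(*
  For small eps the orbit of 0 under f_eps stays in an interval [eps/2, R] on which
  ln f_eps(x) = ln C + Lambda(eps) ln x + O(eps^(1 - Lambda(eps))).  Iterating this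
  log-affine recursion n times, the connection condition f^(n+1)(0) = B(eps_n) gives
    ln B(eps_n) = ln C (1 - l_n^n)/(1 - l_n) + l_n^n ln eps_n + small,   l_n = Lambda(eps_n),
  so W_n = -l_n^n ln eps_n tends to K = ln C/(1 - Lambda) - ln B > 0 and eps_n decays doubly
  exponentially.  Then eps_n = o(Lambda^n), so by differentiability at 0 every replacement of
  l_n, B(eps_n) by Lambda, B costs only o(Lambda^n); this gives W_n = K - (ln C/(1 - Lambda)) Lambda^n
  + o(Lambda^n), and ln(-ln eps_n) = ln W_n - n ln l_n expands to first order around K.
*)
theory Submission
  imports Defs "HOL-Analysis.Analysis" "HOL-Real_Asymp.Real_Asymp"
begin

section \<open>Limits and log-affine iteration\<close>

lemma tendsto_scaled_increment:
  fixes f :: "real \<Rightarrow> real" and y w :: "nat \<Rightarrow> real"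
  assumes f': "(f has_real_derivative D) (at x within S)"
    and y_in: "\<And>n. y n \<in> S" and y_lim: "y \<longlonglongrightarrow> x"
    and scaled: "(\<lambda>n. w n * (y n - x)) \<longlonglongrightarrow> c"
  shows "(\<lambda>n. w n * (f (y n) - f x)) \<longlonglongrightarrow> D * c"
proof -
  \<comment> \<open>Caratheodory slope: \<open>f z - f x = Q z * (z - x)\<close> for all \<open>z\<close>, and \<open>Q\<close> is continuous at \<open>x\<close>.\<close>
  define Q where "Q z = (if z = x then D else (f z - f x) / (z - x))" for z
  have "(Q \<longlongrightarrow> D) (at x within S)"
    using f' unfolding has_field_derivative_iff
    by (rule Lim_transform_eventually) (simp add: Q_def eventually_at_filter)
  then have "continuous (at x within S) Q"
    by (simp add: continuous_within Q_def)
  then have "(\<lambda>n. Q (y n)) \<longlonglongrightarrow> Q x"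
    by (rule continuous_within_tendsto_compose'[OF _ y_in y_lim])
  then have "(\<lambda>n. Q (y n) * (w n * (y n - x))) \<longlonglongrightarrow> D * c"
    by (intro tendsto_mult scaled) (simp add: Q_def)
  moreover have "w n * (f (y n) - f x) = Q (y n) * (w n * (y n - x))" for n
    by (simp add: Q_def)
  ultimately show ?thesis
    by (simp only:)
qed

corollary tendsto_scaled_increment_zero:
  fixes f :: "real \<Rightarrow> real" and y w :: "nat \<Rightarrow> real"
  assumes "f differentiable (at x within S)" "\<And>n. y n \<in> S" "y \<longlonglongrightarrow> x"
    and "(\<lambda>n. w n * (y n - x)) \<longlonglongrightarrow> 0"
  shows "(\<lambda>n. w n * (f (y n) - f x)) \<longlonglongrightarrow> 0"
  using assms tendsto_scaled_increment[of f _ x S y w 0]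
  by (auto simp: real_differentiable_def)

lemma abs_ln_one_plus_le:
  fixes t :: real
  assumes "\<bar>t\<bar> \<le> 1/2"
  shows "\<bar>ln (1 + t)\<bar> \<le> 2 * \<bar>t\<bar>"
proof -
  have "\<bar>ln (1 + t) - t\<bar> \<le> 2 * t\<^sup>2"
    using abs_ln_one_plus_x_minus_x_bound assms by simp
  moreover have "2 * t\<^sup>2 \<le> \<bar>t\<bar>"
    using mult_right_mono[of "2 * \<bar>t\<bar>" 1 "\<bar>t\<bar>"] assms by (simp add: power2_eq_square)
  ultimately show ?thesis by linarith
qed

lemma ln_funpow_affine_estimate:
  fixes g :: "real \<Rightarrow> real"
  assumes maps_to: "g ` S \<subseteq> S" and "x \<in> S" and "0 \<le> l" "l < 1"
    and step: "\<And>y. y \<in> S \<Longrightarrow> \<bar>ln (g y) - (c + l * ln y)\<bar> \<le> \<delta>"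
  shows "\<bar>ln ((g ^^ k) x) - (c * (1 - l ^ k) / (1 - l) + l ^ k * ln x)\<bar> \<le> \<delta> / (1 - l)"
proof (induction k)
  case 0
  have "0 \<le> \<delta>" using step[OF \<open>x \<in> S\<close>] by linarith
  then show ?case using \<open>l < 1\<close> by simp
next
  case (Suc k)
  define y where "y = (g ^^ k) x"
  have "y \<in> S"
    unfolding y_def by (induction k) (use \<open>x \<in> S\<close> maps_to in auto)
  have "c * (1 - l ^ Suc k) / (1 - l) + l ^ Suc k * ln x
        = c + l * (c * (1 - l ^ k) / (1 - l) + l ^ k * ln x)"
    using \<open>l < 1\<close> by (simp add: field_simps)
  then have "\<bar>ln ((g ^^ Suc k) x) - (c * (1 - l ^ Suc k) / (1 - l) + l ^ Suc k * ln x)\<bar>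
        = \<bar>(ln (g y) - (c + l * ln y)) + l * (ln y - (c * (1 - l ^ k) / (1 - l) + l ^ k * ln x))\<bar>"
    by (simp add: y_def algebra_simps)
  also have "\<dots> \<le> \<bar>ln (g y) - (c + l * ln y)\<bar>
      + l * \<bar>ln y - (c * (1 - l ^ k) / (1 - l) + l ^ k * ln x)\<bar>"
    by (rule order.trans[OF abs_triangle_ineq]) (simp add: abs_mult \<open>0 \<le> l\<close>)
  also have "\<dots> \<le> \<delta> + l * (\<delta> / (1 - l))"
    using step[OF \<open>y \<in> S\<close>] Suc.IH \<open>0 \<le> l\<close> unfolding y_def
    by (intro add_mono mult_left_mono) auto
  also have "\<dots> = \<delta> / (1 - l)"
    using \<open>l < 1\<close> by (simp add: field_simps)
  finally show ?case .
qed

lemma exists_powr_lt_self: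
  fixes C L :: real
  assumes "0 < C" "L < 1"
  obtains R where "1 \<le> R" "C * R powr L < R"
proof
  define R where "R = (C + 1) powr (1 / (1 - L))"
  show "1 \<le> R"
    unfolding R_def using assms by (intro ge_one_powr_ge_zero) auto
  have "R powr (1 - L) = C + 1"
    unfolding R_def using assms by (simp add: powr_powr)
  moreover have "R = R powr L * R powr (1 - L)"
    using \<open>1 \<le> R\<close> by (simp flip: powr_add)
  ultimately have "R = R powr L + C * R powr L"
    by (simp add: algebra_simps)
  moreover have "0 < R powr L"
    using \<open>1 \<le> R\<close> by simp
  ultimately show "C * R powr L < R"
    by linarith
qed

lemma tendsto_doubly_exponential_over_geometric:
  fixes x :: "nat \<Rightarrow> real"
  assumes "1 < q" "0 < d" "0 < L"
    and bound: "eventually (\<lambda>n. \<bar>x n\<bar> \<le> c * exp (- d * q ^ n)) sequentially"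
  shows "(\<lambda>n. real n * x n / L ^ n) \<longlonglongrightarrow> 0" and "(\<lambda>n. x n / L ^ n) \<longlonglongrightarrow> 0"
proof -
  have "(\<lambda>n. real n * (c * exp (- d * q ^ n)) / L ^ n) \<longlonglongrightarrow> 0"
    using assms by real_asymp
  moreover have "eventually (\<lambda>n. \<bar>real n * x n / L ^ n\<bar>
      \<le> real n * (c * exp (- d * q ^ n)) / L ^ n) sequentially"
    using bound
    by eventually_elim (use \<open>0 < L\<close> in \<open>simp add: abs_mult abs_divide divide_right_mono mult_left_mono\<close>)
  ultimately show "(\<lambda>n. real n * x n / L ^ n) \<longlonglongrightarrow> 0"
    by (simp add: Lim_null_comparison)
  have "(\<lambda>n. c * exp (- d * q ^ n) / L ^ n) \<longlonglongrightarrow> 0"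
    using assms by real_asymp
  moreover have "eventually (\<lambda>n. \<bar>x n / L ^ n\<bar> \<le> c * exp (- d * q ^ n) / L ^ n) sequentially"
    using bound by eventually_elim (use \<open>0 < L\<close> in \<open>simp add: abs_divide divide_right_mono\<close>)
  ultimately show "(\<lambda>n. x n / L ^ n) \<longlonglongrightarrow> 0"
    by (simp add: Lim_null_comparison)
qed

section \<open>Orbits of the monodromy map for a fixed parameter\<close>

lemma monodromy_map_relative_error:
  fixes C e M R :: real and Lam :: "real \<Rightarrow> real" and psi :: "real \<Rightarrow> real \<Rightarrow> real"
  defines "l \<equiv> Lam e"
  assumes "0 < C" "0 < e" "0 < l" "l < 1" "1 \<le> R"
    and psi_bound: "\<And>u. u \<in> {0..R} \<Longrightarrow> \<bar>psi u e\<bar> \<le> M"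
    and x: "x \<in> {e/2..R}"
  obtains t where "\<bar>t\<bar> \<le> e * (1 + M) / (C * (e/2) powr l)"
    and "C * x powr l * \<bar>t\<bar> \<le> e * (1 + M)"
    and "monodromy_map C Lam psi e x = C * x powr l * (1 + t)"
proof
  define xl where "xl = x powr l"
  define t where "t = e * (1 + psi xl e) / (C * xl)"
  have "0 < x" using x \<open>0 < e\<close> by simp
  then have "0 < xl" unfolding xl_def by simp
  have "xl \<le> R powr l"
    unfolding xl_def using x \<open>0 < x\<close> \<open>0 < l\<close> by (intro powr_mono2) auto
  also have "\<dots> \<le> R"
    using powr_mono[of l 1 R] \<open>1 \<le> R\<close> \<open>l < 1\<close> by simp
  finally have "\<bar>1 + psi xl e\<bar> \<le> 1 + M"
    using psi_bound[of xl] \<open>0 < xl\<close> by auto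
  then show "C * x powr l * \<bar>t\<bar> \<le> e * (1 + M)"
    unfolding t_def xl_def[symmetric] using \<open>0 < e\<close> \<open>0 < C\<close> \<open>0 < xl\<close>
    by (simp add: abs_mult abs_divide)
  have "(e/2) powr l \<le> xl"
    unfolding xl_def using x \<open>0 < e\<close> \<open>0 < l\<close> by (intro powr_mono2) auto
  have "\<bar>t\<bar> \<le> e * (1 + M) / (C * xl)"
    unfolding t_def using \<open>\<bar>1 + psi xl e\<bar> \<le> 1 + M\<close> \<open>0 < e\<close> \<open>0 < C\<close> \<open>0 < xl\<close>
    by (simp add: abs_mult abs_divide divide_right_mono)
  also have "\<dots> \<le> e * (1 + M) / (C * (e/2) powr l)"
    using \<open>(e/2) powr l \<le> xl\<close> \<open>\<bar>1 + psi xl e\<bar> \<le> 1 + M\<close> \<open>0 < e\<close> \<open>0 < C\<close> \<open>0 < xl\<close>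
    by (intro divide_left_mono mult_left_mono mult_pos_pos) auto
  finally show "\<bar>t\<bar> \<le> e * (1 + M) / (C * (e/2) powr l)" .
  show "monodromy_map C Lam psi e x = C * x powr l * (1 + t)"
    unfolding monodromy_map_def t_def xl_def l_def using \<open>0 < C\<close> \<open>0 < xl\<close>
    by (simp add: xl_def field_simps)
qed

lemma monodromy_map_step:
  fixes C e M R :: real and Lam :: "real \<Rightarrow> real" and psi :: "real \<Rightarrow> real \<Rightarrow> real"
  defines "l \<equiv> Lam e"
  defines "r \<equiv> e * (1 + M) / (C * (e/2) powr l)"
  assumes "0 < C" "0 < e" "0 < l" "l < 1" "1 \<le> R"
    and psi_bound: "\<And>u. u \<in> {0..R} \<Longrightarrow> \<bar>psi u e\<bar> \<le> M"
    and trap: "C * R powr l + e * (1 + M) \<le> R"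
    and small: "r \<le> 1/2"
    and x: "x \<in> {e/2..R}"
  shows "monodromy_map C Lam psi e x \<in> {e/2..R}"
    and "\<bar>ln (monodromy_map C Lam psi e x) - (ln C + l * ln x)\<bar> \<le> 2 * r"
proof -
  obtain t where "\<bar>t\<bar> \<le> r" "C * x powr l * \<bar>t\<bar> \<le> e * (1 + M)"
    and g_eq: "monodromy_map C Lam psi e x = C * x powr l * (1 + t)"
    using monodromy_map_relative_error[where Lam = Lam and e = e and psi = psi,
        OF assms(3-8)[unfolded l_def] x]
    unfolding l_def r_def by blast
  have "0 < x" "(e/2) powr l \<le> x powr l" "x powr l \<le> R powr l"
    using x \<open>0 < e\<close> \<open>0 < l\<close> by (auto intro!: powr_mono2)
  have "e \<le> e * (1 + M)"
    using psi_bound[of 0] \<open>1 \<le> R\<close> \<open>0 < e\<close> by simp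
  also have "\<dots> \<le> C * (e/2) powr l * (1/2)"
    using small \<open>0 < C\<close> \<open>0 < e\<close> by (simp add: r_def field_simps)
  also have "\<dots> \<le> C * x powr l * (1 + t)"
    using \<open>(e/2) powr l \<le> x powr l\<close> \<open>\<bar>t\<bar> \<le> r\<close> small \<open>0 < C\<close>
    by (intro mult_mono) auto
  finally have "e/2 \<le> monodromy_map C Lam psi e x"
    using \<open>0 < e\<close> g_eq by simp
  moreover have "C * x powr l * t \<le> C * x powr l * \<bar>t\<bar>"
    using \<open>0 < C\<close> by (intro mult_left_mono) auto
  moreover have "C * x powr l \<le> C * R powr l"
    using \<open>x powr l \<le> R powr l\<close> \<open>0 < C\<close> by simp
  moreover have "monodromy_map C Lam psi e x = C * x powr l + C * x powr l * t"
    by (simp add: g_eq distrib_left)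
  ultimately show "monodromy_map C Lam psi e x \<in> {e/2..R}"
    using trap \<open>C * x powr l * \<bar>t\<bar> \<le> e * (1 + M)\<close> unfolding atLeastAtMost_iff by linarith
  have "ln (monodromy_map C Lam psi e x) = ln C + l * ln x + ln (1 + t)"
    using g_eq \<open>\<bar>t\<bar> \<le> r\<close> small \<open>0 < C\<close> \<open>0 < x\<close> by (simp add: ln_mult ln_powr)
  then show "\<bar>ln (monodromy_map C Lam psi e x) - (ln C + l * ln x)\<bar> \<le> 2 * r"
    using abs_ln_one_plus_le[of t] \<open>\<bar>t\<bar> \<le> r\<close> small by simp
qed

lemma monodromy_orbit_ln_estimate:
  fixes C e M R :: real and Lam :: "real \<Rightarrow> real" and psi :: "real \<Rightarrow> real \<Rightarrow> real"
  defines "l \<equiv> Lam e"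
  defines "r \<equiv> e * (1 + M) / (C * (e/2) powr l)"
  assumes "0 < C" "0 < e" "0 < l" "l < 1" "1 \<le> R"
    and psi_bound: "\<And>u. u \<in> {0..R} \<Longrightarrow> \<bar>psi u e\<bar> \<le> M"
    and trap: "C * R powr l + e * (1 + M) \<le> R"
    and small: "r \<le> 1/2"
    and psi_0: "\<bar>psi 0 e\<bar> \<le> 1/2"
  shows "\<bar>ln ((monodromy_map C Lam psi e ^^ (k + 1)) 0)
           - (ln C * (1 - l ^ k) / (1 - l) + l ^ k * ln (e * (1 + psi 0 e)))\<bar> \<le> 2 * r / (1 - l)"
proof -
  let ?g = "monodromy_map C Lam psi e"
  have g_0: "?g 0 = e * (1 + psi 0 e)"
    by (simp add: monodromy_map_def)
  have "\<bar>psi 0 e\<bar> \<le> M"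
    using psi_bound \<open>1 \<le> R\<close> by simp
  then have "?g 0 \<le> e * (1 + M)"
    using g_0 \<open>0 < e\<close> by simp
  moreover have "0 \<le> C * R powr l"
    using \<open>0 < C\<close> by simp
  ultimately have "?g 0 \<le> R"
    using trap by linarith
  moreover have "e * (1/2) \<le> e * (1 + psi 0 e)"
    using psi_0 \<open>0 < e\<close> by (intro mult_left_mono) auto
  ultimately have "?g 0 \<in> {e/2..R}"
    using g_0 by simp
  have step: "?g y \<in> {e/2..R}" "\<bar>ln (?g y) - (ln C + l * ln y)\<bar> \<le> 2 * r" if "y \<in> {e/2..R}" for y
    using monodromy_map_step[where x = y and C = C and e = e and Lam = Lam and psi = psi
        and M = M and R = R] assms that
    unfolding l_def r_def by auto
  have "\<bar>ln ((?g ^^ k) (?g 0)) - (ln C * (1 - l ^ k) / (1 - l) + l ^ k * ln (?g 0))\<bar> \<le> 2 * r / (1 - l)"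
    by (rule ln_funpow_affine_estimate[where S = "{e/2..R}"])
       (use step \<open>?g 0 \<in> {e/2..R}\<close> \<open>0 < l\<close> \<open>l < 1\<close> in auto)
  then show ?thesis
    by (simp add: g_0 funpow_Suc_right del: funpow.simps)
qed

section \<open>Asymptotics of the connection parameters\<close>

locale polycycle_connections =
  fixes C :: real
    and Lam :: "real \<Rightarrow> real"
    and psi :: "real \<Rightarrow> real \<Rightarrow> real"
    and Bf :: "real \<Rightarrow> real"
    and eps :: "nat \<Rightarrow> real"
  assumes C_pos: "C > 0"
    and Lam_pos: "0 < Lam 0" and Lam_lt1: "Lam 0 < 1"
    and Lam_diff: "Lam differentiable (at 0 within {0..})"
    and B_pos: "Bf 0 > 0"
    and B_diff: "Bf differentiable (at 0 within {0..})"
    and B_inside: "ln (Bf 0) < ln C / (1 - Lam 0)"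
    and psi_cont: "continuous_on ({0..} \<times> {0..}) (\<lambda>(u, e). psi u e)"
    and psi_00: "psi 0 0 = 0"
    and eps_nonneg: "\<And>n. eps n \<ge> 0"
    and eps_lim: "eps \<longlonglongrightarrow> 0"
    and connection: "\<And>n. (monodromy_map C Lam psi (eps n) ^^ (n + 1)) 0 = Bf (eps n)"
begin

abbreviation lam :: "nat \<Rightarrow> real" where
  "lam n \<equiv> Lam (eps n)"

text \<open>\<open>ln_fixed_point\<close> is the logarithm of the fixed point \<open>C powr (1 / (1 - Lam 0))\<close> of the
  unperturbed map \<open>x \<mapsto> C * x powr Lam 0\<close>; \<open>B_inside\<close> says that \<open>Bf 0\<close> lies below it.\<close>

abbreviation ln_fixed_point :: real where
  "ln_fixed_point \<equiv> ln C / (1 - Lam 0)"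

abbreviation fixed_point_gap :: real where
  "fixed_point_gap \<equiv> ln_fixed_point - ln (Bf 0)"

definition orbit_error :: "nat \<Rightarrow> real" where
  "orbit_error n = ln (Bf (eps n))
     - (ln C * (1 - lam n ^ n) / (1 - lam n) + lam n ^ n * ln (eps n * (1 + psi 0 (eps n))))"

lemma fixed_point_gap_pos: "0 < fixed_point_gap"
  using B_inside by linarith

lemma eps_pos: "0 < eps n"
proof (rule ccontr)
  assume "\<not> 0 < eps n"
  then have "eps n = 0"
    using eps_nonneg[of n] by simp
  have "(monodromy_map C Lam psi 0 ^^ k) 0 = 0" for k
    by (induction k) (simp_all add: monodromy_map_def)
  then have "Bf 0 = 0"
    using connection[of n] \<open>eps n = 0\<close> by (simp del: funpow.simps)
  with B_pos show False
    by simp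
qed

lemma tendsto_comp_eps:
  assumes "continuous (at 0 within {0..}) f"
  shows "(\<lambda>n. f (eps n)) \<longlonglongrightarrow> f 0"
  using continuous_within_tendsto_compose'[OF assms _ eps_lim] eps_nonneg by simp

lemma tendsto_scaled_increment_at_eps:
  assumes "f differentiable (at 0 within {0..})" and "(\<lambda>n. w n * eps n) \<longlonglongrightarrow> 0"
  shows "(\<lambda>n. w n * (f (eps n) - f 0)) \<longlonglongrightarrow> 0"
  using tendsto_scaled_increment_zero[OF assms(1) _ eps_lim] assms(2) eps_nonneg by simp

lemma ln_Lam_differentiable: "(\<lambda>e. ln (Lam e)) differentiable (at 0 within {0..})"
  using Lam_diff Lam_pos unfolding real_differentiable_def by (auto intro: derivative_intros)

lemma lam_tendsto: "lam \<longlonglongrightarrow> Lam 0"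
  using tendsto_comp_eps[OF differentiable_imp_continuous_within[OF Lam_diff]] .

lemma psi_0_eps_tendsto: "(\<lambda>n. psi 0 (eps n)) \<longlonglongrightarrow> 0"
proof -
  have "(\<lambda>n. (\<lambda>(u, e). psi u e) (0, eps n)) \<longlonglongrightarrow> (\<lambda>(u, e). psi u e) (0, 0)"
    by (rule continuous_on_tendsto_compose[OF psi_cont])
       (auto intro!: tendsto_Pair eps_lim simp: eps_nonneg)
  then show ?thesis
    using psi_00 by simp
qed

lemma lam_eventually_bounds: "eventually (\<lambda>n. 0 < lam n \<and> lam n < (1 + Lam 0) / 2) sequentially"
proof -
  have "Lam 0 < (1 + Lam 0) / 2"
    using Lam_lt1 by simp
  with lam_tendsto have "eventually (\<lambda>n. lam n < (1 + Lam 0) / 2) sequentially"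
    by (rule order_tendstoD(2))
  moreover have "eventually (\<lambda>n. 0 < lam n) sequentially"
    using lam_tendsto Lam_pos by (rule order_tendstoD(1))
  ultimately show ?thesis
    by eventually_elim simp
qed

lemma orbit_estimate_eventually_applies:
  assumes "1 \<le> R" "C * R powr Lam 0 < R" "0 < s"
  shows "eventually (\<lambda>n. C * R powr lam n + eps n * (1 + M) < R
      \<and> (1 + M) / C * (2 * eps n powr s) < 1/2 \<and> \<bar>psi 0 (eps n)\<bar> < 1/2 \<and> eps n < 1) sequentially"
proof -
  have "(\<lambda>n. C * R powr lam n + eps n * (1 + M)) \<longlonglongrightarrow> C * R powr Lam 0 + 0 * (1 + M)"
    using \<open>1 \<le> R\<close> by (intro tendsto_intros lam_tendsto eps_lim) auto
  then have "eventually (\<lambda>n. C * R powr lam n + eps n * (1 + M) < R) sequentially"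
    by (rule order_tendstoD(2)) (use \<open>C * R powr Lam 0 < R\<close> in simp)
  moreover have "(\<lambda>n. (1 + M) / C * (2 * eps n powr s)) \<longlonglongrightarrow> (1 + M) / C * (2 * 0)"
    using \<open>0 < s\<close> by (intro tendsto_intros tendsto_zero_powrI eps_lim) (auto simp: eps_nonneg)
  then have "eventually (\<lambda>n. (1 + M) / C * (2 * eps n powr s) < 1/2) sequentially"
    by (rule order_tendstoD(2)) simp
  moreover have "eventually (\<lambda>n. \<bar>psi 0 (eps n)\<bar> < 1/2) sequentially"
    using order_tendstoD(2)[OF tendsto_rabs_zero[OF psi_0_eps_tendsto], of "1/2"] by simp
  moreover have "eventually (\<lambda>n. eps n < 1) sequentially"
    using order_tendstoD(2)[OF eps_lim, of 1] by simp
  ultimately show ?thesis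
    by eventually_elim simp
qed

lemma orbit_error_eventually_le:
  assumes R: "1 \<le> R" "C * R powr Lam 0 < R"
    and psi_bound: "\<And>u e. u \<in> {0..R} \<Longrightarrow> e \<in> {0..1} \<Longrightarrow> \<bar>psi u e\<bar> \<le> M"
  defines "s \<equiv> (1 - Lam 0) / 2"
  shows "eventually (\<lambda>n. \<bar>orbit_error n\<bar> \<le> 4 * (1 + M) / (C * s) * eps n powr s) sequentially"
proof -
  have "0 < s" "(1 + Lam 0) / 2 = 1 - s"
    using Lam_lt1 by (simp_all add: s_def field_simps)
  have "0 \<le> M"
    using psi_bound[of 0 0] \<open>1 \<le> R\<close> by simp
  show ?thesis
    using orbit_estimate_eventually_applies[OF R \<open>0 < s\<close>, of M] lam_eventually_bounds
  proof eventually_elim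
    case (elim n)
    then have "0 < lam n" "lam n < 1 - s"
      using \<open>(1 + Lam 0) / 2 = 1 - s\<close> by simp_all
    define r where "r = eps n * (1 + M) / (C * (eps n / 2) powr lam n)"
    have r_eq: "r = (1 + M) / C * (2 powr lam n * eps n powr (1 - lam n))"
      using eps_pos[of n] by (simp add: r_def powr_divide powr_diff field_simps)
    have "2 powr lam n \<le> 2"
      using powr_mono[of "lam n" 1 2] \<open>lam n < 1 - s\<close> \<open>0 < s\<close> by simp
    moreover have "eps n powr (1 - lam n) \<le> eps n powr s"
      using elim \<open>lam n < 1 - s\<close> eps_nonneg[of n] by (intro powr_mono') auto
    ultimately have "(1 + M) / C * (2 powr lam n * eps n powr (1 - lam n)) \<le> (1 + M) / C * (2 * eps n powr s)"
      using C_pos \<open>0 \<le> M\<close> by (intro mult_left_mono mult_mono) auto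
    then have r_le: "r \<le> (1 + M) / C * (2 * eps n powr s)"
      by (simp add: r_eq)
    then have "r \<le> 1/2"
      using elim by linarith
    then have "\<bar>orbit_error n\<bar> \<le> 2 * r / (1 - lam n)"
      using monodromy_orbit_ln_estimate[where C = C and e = "eps n" and Lam = Lam and psi = psi
          and M = M and R = R and k = n] C_pos eps_pos[of n] elim \<open>0 < lam n\<close> \<open>lam n < 1 - s\<close>
        \<open>1 \<le> R\<close> \<open>0 < s\<close> psi_bound
      unfolding orbit_error_def r_def connection[of n, symmetric] by auto
    also have "\<dots> \<le> 2 * ((1 + M) / C * (2 * eps n powr s)) / s"
      using r_le \<open>lam n < 1 - s\<close> \<open>0 < s\<close> \<open>0 \<le> M\<close> C_pos
      by (intro frac_le mult_left_mono) (auto simp: r_eq)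
    finally show ?case
      by (simp add: field_simps)
  qed
qed

lemma orbit_error_le_powr:
  obtains c where "0 \<le> c"
    "eventually (\<lambda>n. \<bar>orbit_error n\<bar> \<le> c * eps n powr ((1 - Lam 0) / 2)) sequentially"
proof -
  obtain R where R: "1 \<le> R" "C * R powr Lam 0 < R"
    using exists_powr_lt_self[OF C_pos Lam_lt1] by blast
  have "compact ({0..R} \<times> {0..1::real})" "continuous_on ({0..R} \<times> {0..1}) (\<lambda>(u, e). psi u e)"
    by (auto intro!: compact_Times continuous_on_subset[OF psi_cont])
  then obtain M where "0 \<le> M" "\<And>z. z \<in> {0..R} \<times> {0..1} \<Longrightarrow> \<bar>(\<lambda>(u, e). psi u e) z\<bar> \<le> M"
    by (rule continuous_on_compact_bound) auto
  then have "\<And>u e. u \<in> {0..R} \<Longrightarrow> e \<in> {0..1} \<Longrightarrow> \<bar>psi u e\<bar> \<le> M"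
    by force
  from orbit_error_eventually_le[OF R this] show thesis
    by (rule that[rotated]) (use \<open>0 \<le> M\<close> C_pos Lam_lt1 in \<open>auto intro!: divide_nonneg_pos\<close>)
qed

lemma orbit_error_tendsto: "orbit_error \<longlonglongrightarrow> 0"
proof -
  obtain c where
    bound: "eventually (\<lambda>n. \<bar>orbit_error n\<bar> \<le> c * eps n powr ((1 - Lam 0) / 2)) sequentially"
    using orbit_error_le_powr by blast
  have "(\<lambda>n. c * eps n powr ((1 - Lam 0) / 2)) \<longlonglongrightarrow> c * 0"
    using Lam_lt1 by (intro tendsto_intros tendsto_zero_powrI eps_lim) (auto simp: eps_nonneg)
  with bound show ?thesis
    using Lim_null_comparison[of orbit_error "\<lambda>n. c * eps n powr ((1 - Lam 0) / 2)"] by simp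
qed

lemma lam_power_tendsto: "(\<lambda>n. lam n ^ n) \<longlonglongrightarrow> 0"
proof (rule Lim_null_comparison)
  show "eventually (\<lambda>n. norm (lam n ^ n) \<le> ((1 + Lam 0) / 2) ^ n) sequentially"
    using lam_eventually_bounds by eventually_elim (simp add: power_mono)
  show "(\<lambda>n. ((1 + Lam 0) / 2) ^ n) \<longlonglongrightarrow> 0"
    using Lam_pos Lam_lt1 by (intro LIMSEQ_power_zero) simp
qed

definition eps_log_scaled :: "nat \<Rightarrow> real" where
  "eps_log_scaled n = - ln (eps n) * lam n ^ n"

lemma eps_log_scaled_eventually_eq:
  "eventually (\<lambda>n. eps_log_scaled n
      = (ln C / (1 - lam n) - ln (Bf (eps n)))
        + lam n ^ n * (ln (1 + psi 0 (eps n)) - ln C / (1 - lam n)) + orbit_error n) sequentially"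
proof -
  have "(\<lambda>n. 1 + psi 0 (eps n)) \<longlonglongrightarrow> 1 + 0"
    by (intro tendsto_intros psi_0_eps_tendsto)
  then have "eventually (\<lambda>n. 0 < 1 + psi 0 (eps n)) sequentially"
    by (rule order_tendstoD(1)) simp
  then show ?thesis
  proof eventually_elim
    case (elim n)
    have "ln (eps n * (1 + psi 0 (eps n))) = ln (eps n) + ln (1 + psi 0 (eps n))"
      using elim eps_pos[of n] by (simp add: ln_mult)
    moreover have "ln C * (1 - lam n ^ n) / (1 - lam n) = ln C / (1 - lam n) - lam n ^ n * (ln C / (1 - lam n))"
      by (simp add: diff_divide_distrib right_diff_distrib)
    ultimately show ?case
      by (simp add: eps_log_scaled_def orbit_error_def algebra_simps)
  qed
qed

lemma eps_log_scaled_tendsto: "eps_log_scaled \<longlonglongrightarrow> fixed_point_gap"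
proof -
  have "(\<lambda>n. Bf (eps n)) \<longlonglongrightarrow> Bf 0"
    by (intro tendsto_comp_eps differentiable_imp_continuous_within B_diff)
  then have "(\<lambda>n. (ln C / (1 - lam n) - ln (Bf (eps n)))
        + lam n ^ n * (ln (1 + psi 0 (eps n)) - ln C / (1 - lam n)) + orbit_error n)
      \<longlonglongrightarrow> (ln_fixed_point - ln (Bf 0)) + 0 * (ln (1 + 0) - ln_fixed_point) + 0"
    using Lam_lt1 B_pos
    by (intro tendsto_intros lam_tendsto lam_power_tendsto psi_0_eps_tendsto orbit_error_tendsto) auto
  then have "eps_log_scaled
      \<longlonglongrightarrow> (ln_fixed_point - ln (Bf 0)) + 0 * (ln (1 + 0) - ln_fixed_point) + 0"
    using eps_log_scaled_eventually_eq by (rule Lim_transform_eventually[OF _ eventually_mono]) simp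
  then show ?thesis
    by simp
qed

lemma eps_doubly_exponential:
  obtains q d where "1 < q" "0 < d" "eventually (\<lambda>n. eps n \<le> exp (- d * q ^ n)) sequentially"
proof -
  define q where "q = 2 / (1 + Lam 0)"
  have "1 < q"
    using Lam_pos Lam_lt1 by (simp add: q_def field_simps)
  have "x / 2 < x" if "0 < x" for x :: real
    using that by simp
  with fixed_point_gap_pos have "fixed_point_gap / 2 < fixed_point_gap"
    by blast
  with eps_log_scaled_tendsto have "eventually (\<lambda>n. fixed_point_gap / 2 < eps_log_scaled n) sequentially"
    by (rule order_tendstoD(1))
  moreover have "eventually (\<lambda>n. 0 < lam n \<and> lam n < (1 + Lam 0) / 2) sequentially"
    by (rule lam_eventually_bounds)
  ultimately have "eventually (\<lambda>n. eps n \<le> exp (- (fixed_point_gap / 2) * q ^ n)) sequentially"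
  proof eventually_elim
    case (elim n)
    then have "0 < lam n ^ n" "lam n ^ n \<le> ((1 + Lam 0) / 2) ^ n"
      by (simp_all add: power_mono)
    have "fixed_point_gap / 2 * q ^ n = fixed_point_gap / 2 / ((1 + Lam 0) / 2) ^ n"
      by (simp add: q_def power_divide)
    also have "\<dots> \<le> fixed_point_gap / 2 / lam n ^ n"
      using fixed_point_gap_pos \<open>0 < lam n ^ n\<close> \<open>lam n ^ n \<le> _\<close> by (intro divide_left_mono) auto
    also have "\<dots> \<le> eps_log_scaled n / lam n ^ n"
      using elim \<open>0 < lam n ^ n\<close> by (intro divide_right_mono) auto
    also have "\<dots> = - ln (eps n)"
      using elim by (simp add: eps_log_scaled_def)
    finally have "ln (eps n) \<le> - (fixed_point_gap / 2 * q ^ n)"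
      by linarith
    then show ?case
      using eps_pos[of n] by (metis exp_le_cancel_iff exp_ln mult_minus_left)
  qed
  with \<open>1 < q\<close> fixed_point_gap_pos show thesis
    by (intro that[of q "fixed_point_gap / 2"]) auto
qed

lemma eps_over_geometric:
  assumes "0 < L"
  shows "(\<lambda>n. real n * eps n / L ^ n) \<longlonglongrightarrow> 0" and "(\<lambda>n. eps n / L ^ n) \<longlonglongrightarrow> 0"
proof -
  obtain q d where "1 < q" "0 < d" and bound: "eventually (\<lambda>n. eps n \<le> exp (- d * q ^ n)) sequentially"
    by (rule eps_doubly_exponential)
  have "eventually (\<lambda>n. \<bar>eps n\<bar> \<le> 1 * exp (- d * q ^ n)) sequentially"
    using bound by eventually_elim (simp add: eps_nonneg)
  from tendsto_doubly_exponential_over_geometric[OF \<open>1 < q\<close> \<open>0 < d\<close> assms this]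
  show "(\<lambda>n. real n * eps n / L ^ n) \<longlonglongrightarrow> 0" and "(\<lambda>n. eps n / L ^ n) \<longlonglongrightarrow> 0" .
qed

lemma orbit_error_over_geometric: "(\<lambda>n. orbit_error n / Lam 0 ^ n) \<longlonglongrightarrow> 0"
proof -
  define s where "s = (1 - Lam 0) / 2"
  have "0 < s"
    using Lam_lt1 by (simp add: s_def)
  obtain c where "0 \<le> c"
    and E_bound: "eventually (\<lambda>n. \<bar>orbit_error n\<bar> \<le> c * eps n powr s) sequentially"
    unfolding s_def by (rule orbit_error_le_powr)
  obtain q d where "1 < q" "0 < d"
    and eps_bound: "eventually (\<lambda>n. eps n \<le> exp (- d * q ^ n)) sequentially"
    by (rule eps_doubly_exponential)
  have "eventually (\<lambda>n. \<bar>orbit_error n\<bar> \<le> c * exp (- (d * s) * q ^ n)) sequentially"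
    using E_bound eps_bound
  proof eventually_elim
    case (elim n)
    have "eps n powr s \<le> exp (- d * q ^ n) powr s"
      using elim \<open>0 < s\<close> eps_nonneg[of n] by (intro powr_mono2) auto
    also have "\<dots> = exp (- (d * s) * q ^ n)"
      by (simp add: powr_def)
    finally show ?case
      using elim \<open>0 \<le> c\<close> by (meson mult_left_mono order.trans)
  qed
  with \<open>1 < q\<close> \<open>0 < d\<close> \<open>0 < s\<close> Lam_pos show ?thesis
    by (intro tendsto_doubly_exponential_over_geometric(2)) auto
qed

lemma lam_power_ratio_tendsto: "(\<lambda>n. (lam n / Lam 0) ^ n) \<longlonglongrightarrow> 1"
proof -
  have "(\<lambda>n. real n * eps n) \<longlonglongrightarrow> 0"
    using eps_over_geometric(1)[of 1] by simp
  with ln_Lam_differentiable have "(\<lambda>n. real n * (ln (lam n) - ln (Lam 0))) \<longlonglongrightarrow> 0"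
    by (rule tendsto_scaled_increment_at_eps)
  then have "(\<lambda>n. exp (real n * (ln (lam n) - ln (Lam 0)))) \<longlonglongrightarrow> exp 0"
    by (rule tendsto_exp)
  moreover have "eventually (\<lambda>n. exp (real n * (ln (lam n) - ln (Lam 0))) = (lam n / Lam 0) ^ n) sequentially"
    using lam_eventually_bounds
  proof eventually_elim
    case (elim n)
    then have "0 < lam n / Lam 0"
      using Lam_pos by simp
    have "real n * (ln (lam n) - ln (Lam 0)) = ln ((lam n / Lam 0) ^ n)"
      using elim Lam_pos \<open>0 < lam n / Lam 0\<close> by (simp add: ln_div ln_realpow)
    then show ?case
      using \<open>0 < lam n / Lam 0\<close> by simp
  qed
  ultimately show ?thesis
    by (simp add: Lim_transform_eventually)
qed

lemma eps_log_scaled_deviation: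
  "(\<lambda>n. (eps_log_scaled n - fixed_point_gap) / Lam 0 ^ n) \<longlonglongrightarrow> - ln_fixed_point"
proof -
  have eps_scaled: "(\<lambda>n. 1 / Lam 0 ^ n * eps n) \<longlonglongrightarrow> 0"
    using eps_over_geometric(2)[OF Lam_pos] by simp
  have "(\<lambda>e. ln C / (1 - Lam e)) differentiable (at 0 within {0..})"
    using Lam_lt1 by (intro differentiable_divide differentiable_diff differentiable_const Lam_diff) auto
  from tendsto_scaled_increment_at_eps[OF this eps_scaled]
  have fixed_point_term: "(\<lambda>n. 1 / Lam 0 ^ n * (ln C / (1 - lam n) - ln_fixed_point)) \<longlonglongrightarrow> 0" .
  have "(\<lambda>e. ln (Bf e)) differentiable (at 0 within {0..})"
    using B_diff B_pos unfolding real_differentiable_def by (auto intro: derivative_intros)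
  from tendsto_scaled_increment_at_eps[OF this eps_scaled]
  have B_term: "(\<lambda>n. 1 / Lam 0 ^ n * (ln (Bf (eps n)) - ln (Bf 0))) \<longlonglongrightarrow> 0" .
  have "(\<lambda>n. 1 / Lam 0 ^ n * (ln C / (1 - lam n) - ln_fixed_point)
        - 1 / Lam 0 ^ n * (ln (Bf (eps n)) - ln (Bf 0))
        + (lam n / Lam 0) ^ n * (ln (1 + psi 0 (eps n)) - ln C / (1 - lam n))
        + orbit_error n / Lam 0 ^ n)
      \<longlonglongrightarrow> 0 - 0 + 1 * (ln (1 + 0) - ln_fixed_point) + 0"
    using Lam_lt1 by (intro tendsto_intros fixed_point_term B_term lam_power_ratio_tendsto
        psi_0_eps_tendsto orbit_error_over_geometric lam_tendsto) auto
  moreover have "eventually (\<lambda>n. 1 / Lam 0 ^ n * (ln C / (1 - lam n) - ln_fixed_point)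
        - 1 / Lam 0 ^ n * (ln (Bf (eps n)) - ln (Bf 0))
        + (lam n / Lam 0) ^ n * (ln (1 + psi 0 (eps n)) - ln C / (1 - lam n))
        + orbit_error n / Lam 0 ^ n = (eps_log_scaled n - fixed_point_gap) / Lam 0 ^ n) sequentially"
    using eps_log_scaled_eventually_eq
  proof eventually_elim
    case (elim n)
    have regroup: "1 / L ^ n * (A - a) - 1 / L ^ n * (B - b) + (l / L) ^ n * (P - A) + E / L ^ n
        = (W - (a - b)) / L ^ n"
      if "L \<noteq> 0" "W = (A - B) + l ^ n * (P - A) + E" for A B P E l L W a b :: real
      unfolding that(2) using that(1) by (simp add: power_divide field_simps)
    show ?case
      by (rule regroup) (use elim Lam_pos in auto)
  qed
  ultimately show ?thesis
    by (simp add: Lim_transform_eventually)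
qed

lemma ln_neg_ln_eps_eventually_eq:
  "eventually (\<lambda>n. ln (- ln (eps n)) = ln (eps_log_scaled n) - real n * ln (lam n)) sequentially"
  using lam_eventually_bounds order_tendstoD(1)[OF eps_log_scaled_tendsto fixed_point_gap_pos]
proof eventually_elim
  case (elim n)
  then have "0 < lam n ^ n"
    by simp
  with elim have "0 < - ln (eps n)"
    by (simp add: eps_log_scaled_def mult_less_0_iff)
  then have "ln (eps_log_scaled n) = ln (- ln (eps n)) + ln (lam n ^ n)"
    unfolding eps_log_scaled_def using elim by (subst ln_mult) simp
  then show ?case
    using elim by (simp add: ln_realpow)
qed

theorem ln_neg_ln_eps_asymptotics:
  "(\<lambda>n. ln (- ln (eps n)) - (- real n * ln (Lam 0) + ln fixed_point_gap
      + (- inverse fixed_point_gap * ln_fixed_point) * Lam 0 ^ n))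
     \<in> o(\<lambda>n. Lam 0 ^ n)"
proof (rule smalloI_tendsto)
  have "(\<lambda>n. 1 / Lam 0 ^ n * (eps_log_scaled n - fixed_point_gap)) \<longlonglongrightarrow> - ln_fixed_point"
    using eps_log_scaled_deviation by simp
  from tendsto_scaled_increment[OF DERIV_ln[OF fixed_point_gap_pos] _ eps_log_scaled_tendsto this]
  have log_term: "(\<lambda>n. 1 / Lam 0 ^ n * (ln (eps_log_scaled n) - ln fixed_point_gap))
      \<longlonglongrightarrow> inverse fixed_point_gap * - ln_fixed_point"
    by simp
  have "(\<lambda>n. real n / Lam 0 ^ n * eps n) \<longlonglongrightarrow> 0"
    using eps_over_geometric(1)[OF Lam_pos] by simp
  with ln_Lam_differentiable
  have lam_term: "(\<lambda>n. real n / Lam 0 ^ n * (ln (lam n) - ln (Lam 0))) \<longlonglongrightarrow> 0"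
    by (rule tendsto_scaled_increment_at_eps)
  have "(\<lambda>n. 1 / Lam 0 ^ n * (ln (eps_log_scaled n) - ln fixed_point_gap)
        - real n / Lam 0 ^ n * (ln (lam n) - ln (Lam 0)) + inverse fixed_point_gap * ln_fixed_point)
      \<longlonglongrightarrow> inverse fixed_point_gap * - ln_fixed_point - 0 + inverse fixed_point_gap * ln_fixed_point"
    by (intro tendsto_intros log_term lam_term)
  moreover have "eventually (\<lambda>n. 1 / Lam 0 ^ n * (ln (eps_log_scaled n) - ln fixed_point_gap)
        - real n / Lam 0 ^ n * (ln (lam n) - ln (Lam 0)) + inverse fixed_point_gap * ln_fixed_point
      = (ln (- ln (eps n)) - (- real n * ln (Lam 0) + ln fixed_point_gap
          + (- inverse fixed_point_gap * ln_fixed_point) * Lam 0 ^ n)) / Lam 0 ^ n) sequentially"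
    using ln_neg_ln_eps_eventually_eq
  proof eventually_elim
    case (elim n)
    have regroup: "1 / L ^ n * (lW - lg) - m / L ^ n * (ll - lL) + ig * a
        = (lE - (- m * lL + lg + (- ig * a) * L ^ n)) / L ^ n"
      if "L \<noteq> 0" "lE = lW - m * ll" for lE lW lg m ll lL ig a L :: real
      unfolding that(2) using that(1) by (simp add: field_simps)
    show ?case
      by (rule regroup) (use elim Lam_pos in auto)
  qed
  ultimately show "(\<lambda>n. (ln (- ln (eps n)) - (- real n * ln (Lam 0) + ln fixed_point_gap
        + (- inverse fixed_point_gap * ln_fixed_point) * Lam 0 ^ n)) / Lam 0 ^ n) \<longlonglongrightarrow> 0"
    by (simp add: Lim_transform_eventually)
  show "eventually (\<lambda>n. Lam 0 ^ n \<noteq> 0) sequentially"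
    using Lam_pos by simp
qed

end

theorem lemma5:
  fixes C :: real
    and Lam :: "real \<Rightarrow> real"
    and psi :: "real \<Rightarrow> real \<Rightarrow> real"
    and Bf :: "real \<Rightarrow> real"
    and eps :: "nat \<Rightarrow> real"
  assumes C_pos: "C > 0"
    and Lam_pos: "0 < Lam 0" and Lam_lt1: "Lam 0 < 1" and Lam_irr: "Lam 0 \<notin> \<rat>"
    and Lam_diff: "Lam differentiable (at 0 within {0..})"
    and B_pos: "Bf 0 > 0"
    and B_diff: "Bf differentiable (at 0 within {0..})"
    and B_inside: "ln (Bf 0) < ln C / (1 - Lam 0)"
    and psi_cont: "continuous_on ({0..} \<times> {0..}) (\<lambda>(u, e). psi u e)"
    and psi_00: "psi 0 0 = 0"
    and eps_nonneg: "\<forall>n. eps n \<ge> 0"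
    and eps_lim: "eps \<longlonglongrightarrow> 0"
    and connection: "\<forall>n. (monodromy_map C Lam psi (eps n) ^^ (n + 1)) 0 = Bf (eps n)"
  shows "(\<lambda>n. ln (- ln (eps n))
            - (- real n * ln (Lam 0)
               + ln (ln C / (1 - Lam 0) - ln (Bf 0))
               + (- inverse (ln C / (1 - Lam 0) - ln (Bf 0)) * (ln C / (1 - Lam 0))) * Lam 0 ^ n))
         \<in> o(\<lambda>n. Lam 0 ^ n)"
proof -
  interpret polycycle_connections C Lam psi Bf eps
    using C_pos Lam_pos Lam_lt1 Lam_diff B_pos B_diff B_inside psi_cont psi_00 eps_nonneg eps_lim
      connection
    by unfold_locales auto
  show ?thesis
    by (rule ln_neg_ln_eps_asymptotics)
qed

end
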